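(* Let $N\geq1$, $\lambda>0$, and $\alpha_1,\ldots,\alpha_N\geq0$. Consider the problem $\max_{p\in\Delta_N}\ell(p):=\sum_{i=1}^N\frac{p_i}{1+2\lambda p_i}\alpha_i$. Let $(\ell_1,\ldots,\ell_N)$ be a permutation of $\{1,\ldots,N\}$ such that $\alpha_{\ell_1}\leq\cdots\leq\alpha_{\ell_N}$, with $\alpha_{\ell_N}>0$, and let $A_i=\{\ell_1,\ldots,\ell_i\}$ for $i\in\{1,\ldots,N\}$, $A_0=\emptyset$. Define $k=\min\left\{i\in\{0,\ldots,N-1\}:(N-i+2\lambda)\sqrt{\alpha_{\ell_{i+1}}}>\sum_{j\notin A_i}\sqrt{\alpha_j}\right\}$. Then $\overline{p}\in\mathbb{R}^N$ defined by $\overline{p}_i=0$ if $i\in A_k$ and $\overline{p}_i=\frac{1}{2\lambda}\left[\frac{(N-k+2\lambda)\sqrt{\alpha_i}}{\sum_{j\notin A_k}\sqrt{\alpha_j}}-1\right]$ if $i\notin A_k$, is the solution of this problem.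
   Context: $\Delta_N=\{p\in\mathbb{R}_+^N:\sum_{i=1}^Np_i=1\}$. *)

theory Defs
  imports Complex_Main
begin

text \<open>Probability simplex Delta_N, coordinates indexed by 1..N (values outside are irrelevant).\<close>
definition simplex :: "nat \<Rightarrow> (nat \<Rightarrow> real) set" where
  "simplex N = {p. (\<forall>i\<in>{1..N}. p i \<ge> 0) \<and> (\<Sum>i=1..N. p i) = 1}"

definition obj :: "nat \<Rightarrow> real \<Rightarrow> (nat \<Rightarrow> real) \<Rightarrow> (nat \<Rightarrow> real) \<Rightarrow> real" where
  "obj N lam \<alpha> p = (\<Sum>i=1..N. p i / (1 + 2 * lam * p i) * \<alpha> i)"

end

theory Submission
  imports Defs
begin

text \<open>
  The objective is a sum of the concave functions \<open>\<alpha>\<^sub>i x / (1 + 2\<lambda>x)\<close> of the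
  separate coordinates, so the KKT conditions are sufficient: if \<open>q\<close> lies in the simplex
  and \<open>\<mu> > 0\<close> equals the slope \<open>\<alpha>\<^sub>i / (1 + 2\<lambda>q\<^sub>i)\<^sup>2\<close> of every summand at \<open>q\<^sub>i\<close>,
  except that it may exceed it where \<open>q\<^sub>i = 0\<close>, then comparing each summand with its
  tangent line at \<open>q\<^sub>i\<close> gives \<open>\<ell>(q) - \<ell>(p) \<ge> \<Sum>\<^sub>i 2\<lambda>\<mu>(p\<^sub>i - q\<^sub>i)\<^sup>2 / (1 + 2\<lambda>p\<^sub>i)\<close>
  for every \<open>p\<close> in the simplex, so \<open>q\<close> is the unique maximiser.

  The point \<open>pbar\<close> satisfies these conditions with
  \<open>\<surd>\<mu> = (\<Sum>\<^bsub>j\<notin>A\<^sub>k\<^esub> \<surd>\<alpha>\<^sub>j) / (N - k + 2\<lambda>)\<close>: off \<open>A\<^sub>k\<close> its definition reads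
  \<open>1 + 2\<lambda> pbar\<^sub>i = \<surd>(\<alpha>\<^sub>i / \<mu>)\<close>, and since \<open>\<alpha> \<circ> \<ell>\<close> is sorted, the minimality of \<open>k\<close>
  says precisely that \<open>\<alpha>\<^sub>i > \<mu>\<close> off \<open>A\<^sub>k\<close> (so \<open>pbar\<^sub>i > 0\<close>) and \<open>\<alpha>\<^sub>i \<le> \<mu>\<close> on \<open>A\<^sub>k\<close>.
\<close>

lemma one_plus_mult_pos: "lam \<ge> 0 \<Longrightarrow> x \<ge> 0 \<Longrightarrow> 1 + 2*lam*x > (0::real)"
  by (simp add: add_pos_nonneg)

lemma frac_tangent_gap:
  fixes lam x y :: real
  assumes "lam \<ge> 0" "x \<ge> 0" "y \<ge> 0"
  shows "y / (1 + 2*lam*y) + (x - y) / (1 + 2*lam*y)^2 - x / (1 + 2*lam*x)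
       = 2*lam*(x - y)^2 / ((1 + 2*lam*x) * (1 + 2*lam*y)^2)"
proof -
  have "1 + 2*lam*x > 0" "1 + 2*lam*y > 0" using assms by (simp_all add: one_plus_mult_pos)
  then show ?thesis
    by (simp add: divide_simps) (simp add: power2_eq_square algebra_simps)
qed

lemma kkt_coordinate_gap:
  fixes lam mu a x y :: real
  assumes "lam > 0" "mu > 0" "a \<ge> 0" "x \<ge> 0" "y \<ge> 0"
    and kkt: "a = mu * (1 + 2*lam*y)^2 \<or> (y = 0 \<and> a \<le> mu)"
  shows "2*lam*mu*(x - y)^2 / (1 + 2*lam*x)
       \<le> y / (1 + 2*lam*y) * a + mu * (x - y) - x / (1 + 2*lam*x) * a"
proof -
  have d: "1 + 2*lam*x > 0" and e: "1 + 2*lam*y > 0"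
    using assms by (simp_all add: one_plus_mult_pos)
  have tangent_split: "y / (1 + 2*lam*y) * a + mu * (x - y) - x / (1 + 2*lam*x) * a
      = a * (2*lam*(x - y)^2 / ((1 + 2*lam*x) * (1 + 2*lam*y)^2))
        + (mu - a / (1 + 2*lam*y)^2) * (x - y)"
    by (simp flip: frac_tangent_gap[OF less_imp_le[OF assms(1)] assms(4,5)]) (simp add: algebra_simps diff_divide_distrib)
  from kkt show ?thesis
  proof
    assume "a = mu * (1 + 2*lam*y)^2"
    with e have "a / (1 + 2*lam*y)^2 = mu" by simp
    moreover have "a * (2*lam*(x - y)^2 / ((1 + 2*lam*x) * (1 + 2*lam*y)^2))
        = a / (1 + 2*lam*y)^2 * (2*lam*(x - y)^2 / (1 + 2*lam*x))"
      by (simp add: mult.commute)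
    ultimately show ?thesis unfolding tangent_split by (simp add: mult_ac)
  next
    assume y0: "y = 0 \<and> a \<le> mu"
    then have "y / (1 + 2*lam*y) * a + mu * (x - y) - x / (1 + 2*lam*x) * a
        - 2*lam*mu*(x - y)^2 / (1 + 2*lam*x) = (mu - a) * x / (1 + 2*lam*x)"
      using d by (simp add: divide_simps) (simp add: algebra_simps power2_eq_square)
    moreover have "(mu - a) * x / (1 + 2*lam*x) \<ge> 0"
      using y0 d assms(4) by simp
    ultimately show ?thesis by linarith
  qed
qed

text \<open>\<open>\<mu>\<close> is the multiplier of the constraint \<open>\<Sum>\<^sub>i p\<^sub>i = 1\<close>, and \<open>\<alpha>\<^sub>i / (1 + 2\<lambda>q\<^sub>i)\<^sup>2\<close>
  is the partial derivative of \<open>obj\<close> at \<open>q\<close>.\<close>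
definition kkt_multiplier :: "nat \<Rightarrow> real \<Rightarrow> (nat \<Rightarrow> real) \<Rightarrow> (nat \<Rightarrow> real) \<Rightarrow> real \<Rightarrow> bool" where
  "kkt_multiplier N lam \<alpha> q mu \<longleftrightarrow> mu > 0 \<and>
     (\<forall>i\<in>{1..N}. \<alpha> i = mu * (1 + 2*lam*q i)^2 \<or> (q i = 0 \<and> \<alpha> i \<le> mu))"

lemma obj_gap_lower_bound:
  assumes "lam > 0" "\<forall>i\<in>{1..N}. \<alpha> i \<ge> 0" "q \<in> simplex N" "p \<in> simplex N"
    and "kkt_multiplier N lam \<alpha> q mu"
  shows "(\<Sum>i=1..N. 2*lam*mu*(p i - q i)^2 / (1 + 2*lam*p i)) \<le> obj N lam \<alpha> q - obj N lam \<alpha> p"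
proof -
  have "(\<Sum>i=1..N. mu * (p i - q i)) = mu * ((\<Sum>i=1..N. p i) - (\<Sum>i=1..N. q i))"
    by (simp add: sum_subtractf sum_distrib_left right_diff_distrib)
  also have "\<dots> = 0" using assms(3,4) by (simp add: simplex_def)
  finally have gap_sum: "obj N lam \<alpha> q - obj N lam \<alpha> p
      = (\<Sum>i=1..N. q i / (1 + 2*lam*q i) * \<alpha> i + mu * (p i - q i) - p i / (1 + 2*lam*p i) * \<alpha> i)"
    by (simp add: obj_def sum.distrib sum_subtractf)
  have "2*lam*mu*(p i - q i)^2 / (1 + 2*lam*p i)
      \<le> q i / (1 + 2*lam*q i) * \<alpha> i + mu * (p i - q i) - p i / (1 + 2*lam*p i) * \<alpha> i"
    if "i \<in> {1..N}" for i
    using assms that by (intro kkt_coordinate_gap) (auto simp: simplex_def kkt_multiplier_def)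
  then show ?thesis unfolding gap_sum by (rule sum_mono)
qed

lemma kkt_unique_maximizer:
  assumes "lam > 0" "\<forall>i\<in>{1..N}. \<alpha> i \<ge> 0" "q \<in> simplex N" "kkt_multiplier N lam \<alpha> q mu"
  shows "(\<forall>p\<in>simplex N. obj N lam \<alpha> p \<le> obj N lam \<alpha> q)
    \<and> (\<forall>p\<in>simplex N. obj N lam \<alpha> p = obj N lam \<alpha> q \<longrightarrow> (\<forall>i\<in>{1..N}. p i = q i))"
proof -
  have mu: "mu > 0" using assms(4) by (simp add: kkt_multiplier_def)
  have "obj N lam \<alpha> p \<le> obj N lam \<alpha> q
      \<and> (obj N lam \<alpha> p = obj N lam \<alpha> q \<longrightarrow> (\<forall>i\<in>{1..N}. p i = q i))"
    if p: "p \<in> simplex N" for p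
  proof -
    have denom_pos: "1 + 2*lam*p i > 0" if "i \<in> {1..N}" for i
      using p that assms(1) by (simp add: simplex_def one_plus_mult_pos)
    have term_nonneg: "0 \<le> 2*lam*mu*(p i - q i)^2 / (1 + 2*lam*p i)" if "i \<in> {1..N}" for i
      using denom_pos[OF that] assms(1) mu by simp
    have "0 \<le> (\<Sum>i=1..N. 2*lam*mu*(p i - q i)^2 / (1 + 2*lam*p i))"
      using term_nonneg by (rule sum_nonneg)
    note bound = this obj_gap_lower_bound[OF assms(1-3) p assms(4)]
    have "\<forall>i\<in>{1..N}. p i = q i" if "obj N lam \<alpha> p = obj N lam \<alpha> q"
    proof
      have "(\<Sum>i=1..N. 2*lam*mu*(p i - q i)^2 / (1 + 2*lam*p i)) = 0"
        using that bound by linarith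
      then have zero: "\<forall>i\<in>{1..N}. 2*lam*mu*(p i - q i)^2 / (1 + 2*lam*p i) = 0"
        using term_nonneg by (subst (asm) sum_nonneg_eq_0_iff) auto
      fix i assume i: "i \<in> {1..N}"
      show "p i = q i" using zero i denom_pos[OF i] assms(1) mu by auto
    qed
    then show ?thesis using bound by linarith
  qed
  then show ?thesis by blast
qed

lemma water_filling_kkt:
  fixes S :: "nat set" and T c :: real
  assumes lam: "lam > 0" and S: "S \<subseteq> {1..N}" "S \<noteq> {}" and \<alpha>: "\<forall>i\<in>{1..N}. \<alpha> i \<ge> 0"
    and T_def: "T = (\<Sum>j\<in>S. sqrt (\<alpha> j))"
    and c_def: "c = real (card S) + 2*lam"
    and above: "\<forall>i\<in>S. c * sqrt (\<alpha> i) > T"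
    and below: "\<forall>i\<in>{1..N} - S. c * sqrt (\<alpha> i) \<le> T"
    and q_def: "\<forall>i\<in>{1..N}. q i = (if i \<in> S then 1/(2*lam) * (c * sqrt (\<alpha> i) / T - 1) else 0)"
  shows "q \<in> simplex N \<and> kkt_multiplier N lam \<alpha> q ((T/c)^2)"
proof -
  have fin: "finite S" using S(1) finite_subset by blast
  have c: "c > 0" using lam c_def by simp
  have T: "T > 0"
  proof -
    obtain i where i: "i \<in> S" using S(2) by blast
    have T_nonneg: "T \<ge> 0" unfolding T_def using S(1) \<alpha> by (intro sum_nonneg) auto
    then have "c * sqrt (\<alpha> i) > 0" using above i by fastforce
    then have "sqrt (\<alpha> i) > 0" using c by (simp add: zero_less_mult_iff)
    moreover have "sqrt (\<alpha> i) \<le> T"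
      unfolding T_def using fin i S(1) \<alpha> by (intro member_le_sum) auto
    ultimately show ?thesis by linarith
  qed
  have q_S: "1 + 2*lam*q i = c * sqrt (\<alpha> i) / T" if "i \<in> S" for i
    using that S(1) q_def lam by auto
  have q_pos: "q i > 0" if "i \<in> S" for i
  proof -
    have "1 + 2*lam*q i > 1" using q_S[OF that] above that T by simp
    then show ?thesis using lam by (simp add: zero_less_mult_iff)
  qed
  have q_nonneg: "q i \<ge> 0" if "i \<in> {1..N}" for i
    using q_pos[of i] q_def that by (cases "i \<in> S") auto
  have "(\<Sum>i=1..N. q i) = (\<Sum>i\<in>S. q i)"
    using S(1) q_def by (intro sum.mono_neutral_right) auto
  also have "\<dots> = (\<Sum>i\<in>S. c/(2*lam*T) * sqrt (\<alpha> i) - 1/(2*lam))"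
    using S(1) q_def lam T by (intro sum.cong) (auto simp: field_simps)
  also have "\<dots> = c/(2*lam*T) * T - real (card S) / (2*lam)"
    by (simp add: sum_subtractf sum_distrib_left T_def)
  also have "\<dots> = 1"
    using lam T by (simp add: c_def field_simps)
  finally have "q \<in> simplex N"
    using q_nonneg by (simp add: simplex_def)
  moreover have "\<alpha> i = (T/c)^2 * (1 + 2*lam*q i)^2 \<or> (q i = 0 \<and> \<alpha> i \<le> (T/c)^2)"
    if i: "i \<in> {1..N}" for i
  proof (cases "i \<in> S")
    case True
    have "(T/c)^2 * (1 + 2*lam*q i)^2 = sqrt (\<alpha> i)^2"
      unfolding q_S[OF True] using T c by (simp add: power_divide power_mult_distrib)
    then show ?thesis using \<alpha> i by simp
  next
    case False
    then have "sqrt (\<alpha> i) \<le> T/c" using below i c by (simp add: pos_le_divide_eq mult.commute)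
    then have "sqrt (\<alpha> i)^2 \<le> (T/c)^2" using \<alpha> i by (intro power_mono) auto
    then have "\<alpha> i \<le> (T/c)^2" using \<alpha> i by simp
    then show ?thesis using False i q_def by simp
  qed
  ultimately show ?thesis using T c by (simp add: kkt_multiplier_def)
qed

lemma sorted_threshold:
  fixes b :: "nat \<Rightarrow> real" and d :: real
  assumes sorted: "\<forall>i\<in>{1..N}. \<forall>j\<in>{1..N}. i \<le> j \<longrightarrow> b i \<le> b j"
    and N: "N \<ge> 1" and "b N > 0" "d > 0"
    and k_def: "k = (LEAST i. i \<in> {0..N-1} \<and> (real (N - i) + d) * b (i+1) > (\<Sum>j=i+1..N. b j))"
  shows "k < N"
    and "\<forall>j\<in>{k+1..N}. (real (N - k) + d) * b j > (\<Sum>j=k+1..N. b j)"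
    and "\<forall>j\<in>{1..k}. (real (N - k) + d) * b j \<le> (\<Sum>j=k+1..N. b j)"
proof -
  define P where "P i \<longleftrightarrow> i \<in> {0..N-1} \<and> (real (N - i) + d) * b (i+1) > (\<Sum>j=i+1..N. b j)" for i
  have k_Least: "k = (LEAST i. P i)" unfolding k_def P_def ..
  have "P (N - 1)" using assms(3,4) N by (simp add: P_def)
  then have "P k" unfolding k_Least by (rule LeastI)
  then have k: "k < N" and at_k: "(real (N - k) + d) * b (k+1) > (\<Sum>j=k+1..N. b j)"
    using N by (auto simp: P_def)
  show "k < N" by (fact k)
  show "\<forall>j\<in>{k+1..N}. (real (N - k) + d) * b j > (\<Sum>j=k+1..N. b j)"
  proof
    fix j assume "j \<in> {k+1..N}"
    then have "b (k+1) \<le> b j" using sorted k by auto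
    then have "(real (N - k) + d) * b (k+1) \<le> (real (N - k) + d) * b j"
      using assms(4) by (intro mult_left_mono) auto
    then show "(real (N - k) + d) * b j > (\<Sum>j=k+1..N. b j)" using at_k by linarith
  qed
  show "\<forall>j\<in>{1..k}. (real (N - k) + d) * b j \<le> (\<Sum>j=k+1..N. b j)"
  proof
    fix j assume j: "j \<in> {1..k}"
    have "\<not> P (k - 1)"
      using j by (intro not_less_Least) (auto simp flip: k_Least)
    moreover have "k - 1 \<in> {0..N-1}" using k by auto
    moreover have "k - 1 + 1 = k" "N - (k - 1) = N - k + 1" using j k by auto
    ultimately have "(real (N - k + 1) + d) * b k \<le> (\<Sum>j=k..N. b j)"
      unfolding P_def by (simp add: not_less algebra_simps)
    also have "(\<Sum>j=k..N. b j) = b k + (\<Sum>j=k+1..N. b j)"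
      using k by (simp add: sum.atLeast_Suc_atMost)
    finally have "(real (N - k) + d) * b k \<le> (\<Sum>j=k+1..N. b j)" by (simp add: algebra_simps)
    moreover have "(real (N - k) + d) * b j \<le> (real (N - k) + d) * b k"
      using j k sorted assms(4) by (intro mult_left_mono) auto
    ultimately show "(real (N - k) + d) * b j \<le> (\<Sum>j=k+1..N. b j)" by linarith
  qed
qed

lemma bij_betw_diff_image_prefix:
  fixes l :: "nat \<Rightarrow> nat"
  assumes "bij_betw l {1..N} {1..N}" "i \<le> N"
  shows "{1..N} - l ` {1..i} = l ` {i+1..N}"
proof -
  have inj: "inj_on l {1..N}" using assms(1) by (rule bij_betw_imp_inj_on)
  have "{1..N} - l ` {1..i} = l ` {1..N} - l ` {1..i}"
    using assms(1) by (simp add: bij_betw_imp_surj_on)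
  also have "\<dots> = l ` ({1..N} - {1..i})"
    using assms(2) by (simp add: inj_on_image_set_diff[OF inj])
  also have "{1..N} - {1..i} = {i+1..N}" by auto
  finally show ?thesis .
qed

lemma sum_diff_image_prefix:
  fixes l :: "nat \<Rightarrow> nat"
  assumes "bij_betw l {1..N} {1..N}" "i \<le> N"
  shows "(\<Sum>j\<in>{1..N} - l ` {1..i}. f j) = (\<Sum>j=i+1..N. f (l j))"
proof -
  have "inj_on l {i+1..N}"
    using bij_betw_imp_inj_on[OF assms(1)] by (rule inj_on_subset) auto
  then show ?thesis unfolding bij_betw_diff_image_prefix[OF assms] by (simp add: sum.reindex)
qed

lemma permuted_threshold:
  fixes l :: "nat \<Rightarrow> nat" and b :: "nat \<Rightarrow> real"
  assumes N: "N \<ge> 1" and d: "d > 0" and bij: "bij_betw l {1..N} {1..N}"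
    and sorted: "\<forall>i\<in>{1..N}. \<forall>j\<in>{1..N}. i \<le> j \<longrightarrow> b (l i) \<le> b (l j)" and "b (l N) > 0"
    and k_def: "k = (LEAST i. i \<in> {0..N-1} \<and>
          (real (N - i) + d) * b (l (i+1)) > (\<Sum>j\<in>{1..N} - l ` {1..i}. b j))"
    and S_def: "S = {1..N} - l ` {1..k}"
  shows "S \<noteq> {}" and "card S = N - k"
    and "\<forall>i\<in>S. (real (card S) + d) * b i > (\<Sum>j\<in>S. b j)"
    and "\<forall>i\<in>{1..N} - S. (real (card S) + d) * b i \<le> (\<Sum>j\<in>S. b j)"
proof -
  have tail_sum: "(\<Sum>j\<in>{1..N} - l ` {1..i}. b j) = (\<Sum>j=i+1..N. b (l j))" if "i \<le> N" for i
    using bij that by (rule sum_diff_image_prefix)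
  have "k = (LEAST i. i \<in> {0..N-1} \<and> (real (N - i) + d) * b (l (i+1)) > (\<Sum>j=i+1..N. b (l j)))"
    unfolding k_def using tail_sum by (intro arg_cong[where f = Least] ext conj_cong refl) auto
  note threshold = sorted_threshold[where b = "\<lambda>j. b (l j)", OF _ N _ d this]
  have k: "k < N"
    and above: "\<forall>j\<in>{k+1..N}. (real (N - k) + d) * b (l j) > (\<Sum>j=k+1..N. b (l j))"
    and below: "\<forall>j\<in>{1..k}. (real (N - k) + d) * b (l j) \<le> (\<Sum>j=k+1..N. b (l j))"
    using threshold sorted assms(5) by auto
  have S_image: "S = l ` {k+1..N}"
    unfolding S_def using k by (intro bij_betw_diff_image_prefix[OF bij]) simp
  then show "S \<noteq> {}" using k by auto
  show card_S: "card S = N - k"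
    unfolding card_eq_sum S_def using sum_diff_image_prefix[OF bij, of k "\<lambda>_. 1::nat"] k by simp
  have sum_S: "(\<Sum>j\<in>S. b j) = (\<Sum>j=k+1..N. b (l j))"
    using tail_sum k by (simp add: S_def)
  show "\<forall>i\<in>S. (real (card S) + d) * b i > (\<Sum>j\<in>S. b j)"
    unfolding card_S sum_S using above S_image by blast
  show "\<forall>i\<in>{1..N} - S. (real (card S) + d) * b i \<le> (\<Sum>j\<in>S. b j)"
    unfolding card_S sum_S using below by (auto simp: S_def)
qed

theorem proposition2p3:
  fixes N :: nat and lam :: real and \<alpha> :: "nat \<Rightarrow> real" and l :: "nat \<Rightarrow> nat"
    and A :: "nat \<Rightarrow> nat set" and k :: nat and pbar :: "nat \<Rightarrow> real"
  assumes "N \<ge> 1" and "lam > 0"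
    and "\<forall>i\<in>{1..N}. \<alpha> i \<ge> 0"
    and "bij_betw l {1..N} {1..N}"
    and "\<forall>i\<in>{1..N}. \<forall>j\<in>{1..N}. i \<le> j \<longrightarrow> \<alpha> (l i) \<le> \<alpha> (l j)"
    and "\<alpha> (l N) > 0"
    and A_def: "\<And>i. A i = l ` {1..i}"
    and k_def: "k = (LEAST i. i \<in> {0..N-1} \<and>
          (real (N - i) + 2 * lam) * sqrt (\<alpha> (l (i+1))) > (\<Sum>j\<in>{1..N} - A i. sqrt (\<alpha> j)))"
    and pbar_def: "\<And>i. pbar i = (if i \<in> A k then 0 else
          1 / (2 * lam) * ((real (N - k) + 2 * lam) * sqrt (\<alpha> i) / (\<Sum>j\<in>{1..N} - A k. sqrt (\<alpha> j)) - 1))"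
  shows "pbar \<in> simplex N
    \<and> (\<forall>p\<in>simplex N. obj N lam \<alpha> p \<le> obj N lam \<alpha> pbar)
    \<and> (\<forall>p\<in>simplex N. obj N lam \<alpha> p = obj N lam \<alpha> pbar \<longrightarrow> (\<forall>i\<in>{1..N}. p i = pbar i))"
proof -
  define S where "S = {1..N} - A k"
  note threshold = permuted_threshold[where b = "\<lambda>j. sqrt (\<alpha> j)" and d = "2*lam",
      OF assms(1) _ assms(4) _ _ k_def[unfolded A_def] S_def[unfolded A_def]]
  have S: "S \<noteq> {}" "card S = N - k"
    and above: "\<forall>i\<in>S. (real (card S) + 2*lam) * sqrt (\<alpha> i) > (\<Sum>j\<in>S. sqrt (\<alpha> j))"
    and below: "\<forall>i\<in>{1..N} - S. (real (card S) + 2*lam) * sqrt (\<alpha> i) \<le> (\<Sum>j\<in>S. sqrt (\<alpha> j))"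
    using threshold assms(2,5,6) by auto
  have "\<forall>i\<in>{1..N}. pbar i = (if i \<in> S then
      1 / (2 * lam) * ((real (card S) + 2*lam) * sqrt (\<alpha> i) / (\<Sum>j\<in>S. sqrt (\<alpha> j)) - 1) else 0)"
    unfolding S(2) by (simp add: S_def pbar_def)
  then have "pbar \<in> simplex N \<and> kkt_multiplier N lam \<alpha> pbar
      (((\<Sum>j\<in>S. sqrt (\<alpha> j)) / (real (card S) + 2*lam))^2)"
    using S_def S(1) by (intro water_filling_kkt[OF assms(2) _ _ assms(3) refl refl above below]) auto
  then show ?thesis using kkt_unique_maximizer[OF assms(2,3)] by blast
qed

end
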